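(* Let $m\ge 2$ and $\bm P_m=\bm I_m-\frac1m\bm J_m\in\mathbb{R}^{m\times m}$. Then $\bm P_m$ admits a unique Cholesky factorization $\bm P_m=\bm L\bm L^T$ with $\bm L\in\mathbb{R}^{m\times m}$ lower triangular with nonnegative diagonal entries, and $\bm L$ is given explicitly by \[ L_{ij}=\begin{cases}\sqrt{\dfrac{m-i}{m-i+1}}, & i=j<m,\\[1ex] -\dfrac{1}{\sqrt{(m-j+1)(m-j)}}, & 1\le j<i\le m,\\[1ex] 0, & \text{otherwise}.\end{cases} \]
   Context: $\bm J_m$ denotes the $m\times m$ all-ones matrix and $\bm I_m$ the identity matrix. *)

theory Defs
  imports "Jordan_Normal_Form.Matrix"
begin

(* Matrices are Jordan_Normal_Form matrices, indices are 0-based: entry (i,j) here is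
   entry (i+1,j+1) of the paper. *)

definition lower_triangular_mat :: "'a::zero mat \<Rightarrow> bool" where
  "lower_triangular_mat A \<longleftrightarrow> (\<forall>i < dim_row A. \<forall>j < dim_col A. i < j \<longrightarrow> A $$ (i,j) = 0)"

definition centering_mat :: "nat \<Rightarrow> real mat" where
  "centering_mat m = 1\<^sub>m m - (1 / real m) \<cdot>\<^sub>m mat m m (\<lambda>_. 1)"

definition chol_centering :: "nat \<Rightarrow> real mat" where
  "chol_centering m = mat m m (\<lambda>(i,j).
     let i' = i + 1; j' = j + 1 in
     if i' = j' \<and> i' < m then sqrt ((real m - real i') / (real m - real i' + 1))
     else if 1 \<le> j' \<and> j' < i' \<and> i' \<le> m then
       - 1 / sqrt ((real m - real j' + 1) * (real m - real j'))
     else 0)"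

definition is_chol_factor :: "nat \<Rightarrow> real mat \<Rightarrow> real mat \<Rightarrow> bool" where
  "is_chol_factor m P L \<longleftrightarrow> L \<in> carrier_mat m m \<and> lower_triangular_mat L
     \<and> (\<forall>i < m. L $$ (i,i) \<ge> 0) \<and> P = L * transpose_mat L"

end

theory Submission
  imports Defs
begin

text \<open>For lower triangular factors, entry \<open>(i,j)\<close>, \<open>j \<le> i\<close>, of \<open>L L\<^sup>T\<close> is
  \<open>\<Sum>k<j. L\<^sub>i\<^sub>k L\<^sub>j\<^sub>k + L\<^sub>i\<^sub>j L\<^sub>j\<^sub>j\<close>. Hence \<open>L L\<^sup>T\<close> determines \<open>L\<close> column by column
  (forward substitution) as soon as the first \<open>m - 1\<close> diagonal entries of one factor are nonzero; the
  last diagonal entry is then fixed by its square and its sign. For the explicit factor, the sum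
  \<open>\<Sum>k<j. 1 / ((m - k) (m - k - 1))\<close> telescopes to \<open>1 / (m - j) - 1 / m\<close>, and adding
  \<open>L\<^sub>i\<^sub>j L\<^sub>j\<^sub>j\<close>, which is \<open>1 - 1 / (m - j)\<close> on and \<open>- 1 / (m - j)\<close> below the diagonal,
  gives the entries of \<open>I - J / m\<close>.\<close>

lemma mult_transpose_mat_entry:
  assumes "A \<in> carrier_mat m n" "i < m" "j < m"
  shows "(A * transpose_mat A) $$ (i,j) = (\<Sum>k<n. A $$ (i,k) * A $$ (j,k))"
  using assms by (simp add: scalar_prod_def atLeast0LessThan)

lemma lower_triangular_mult_transpose_entry:
  assumes A: "A \<in> carrier_mat m m" "lower_triangular_mat A" and "j \<le> i" "i < m"
  shows "(A * transpose_mat A) $$ (i,j) = (\<Sum>k<j. A $$ (i,k) * A $$ (j,k)) + A $$ (i,j) * A $$ (j,j)"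
proof -
  have "{..<m} = {..<Suc j} \<union> {Suc j..<m}" using assms by auto
  then have "(A * transpose_mat A) $$ (i,j) = (\<Sum>k\<in>{..<Suc j} \<union> {Suc j..<m}. A $$ (i,k) * A $$ (j,k))"
    using mult_transpose_mat_entry[of A m m i j] assms by simp
  also have "\<dots> = (\<Sum>k<Suc j. A $$ (i,k) * A $$ (j,k)) + (\<Sum>k\<in>{Suc j..<m}. A $$ (i,k) * A $$ (j,k))"
    by (rule sum.union_disjoint) auto
  also have "(\<Sum>k\<in>{Suc j..<m}. A $$ (i,k) * A $$ (j,k)) = 0"
    using A by (intro sum.neutral) (auto simp: lower_triangular_mat_def)
  finally show ?thesis by simp
qed

lemma cholesky_factor_unique:
  fixes L C :: "'a::linordered_idom mat"
  assumes L: "L \<in> carrier_mat m m" "lower_triangular_mat L" "\<forall>i<m. L $$ (i,i) \<ge> 0"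
    and C: "C \<in> carrier_mat m m" "lower_triangular_mat C" "\<forall>i<m. C $$ (i,i) \<ge> 0"
    and C_diag: "\<forall>i. i + 1 < m \<longrightarrow> C $$ (i,i) \<noteq> 0"
    and eq: "L * transpose_mat L = C * transpose_mat C"
  shows "L = C"
proof -
  have "\<forall>i<m. L $$ (i,j) = C $$ (i,j)" if "j < m" for j
    using that
  proof (induction j rule: less_induct)
    case (less j)
    have "(\<Sum>k<j. L $$ (i,k) * L $$ (j,k)) = (\<Sum>k<j. C $$ (i,k) * C $$ (j,k))" if "i < m" for i
      using less that by (intro sum.cong) auto
    with eq have last: "L $$ (i,j) * L $$ (j,j) = C $$ (i,j) * C $$ (j,j)" if "j \<le> i" "i < m" for i
      using lower_triangular_mult_transpose_entry[OF L(1,2) that]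
        lower_triangular_mult_transpose_entry[OF C(1,2) that] that by simp
    have "(L $$ (j,j))\<^sup>2 = (C $$ (j,j))\<^sup>2"
      using last[of j] less.prems by (simp add: power2_eq_square)
    then have diag: "L $$ (j,j) = C $$ (j,j)"
      using less.prems L(3) C(3) by simp
    show ?case
    proof (intro allI impI)
      fix i assume "i < m"
      consider "i < j" | "i = j" | "j < i" by linarith
      then show "L $$ (i,j) = C $$ (i,j)"
      proof cases
        case 1
        then show ?thesis using L(1,2) C(1,2) less.prems by (simp add: lower_triangular_mat_def)
      next
        case 3
        then show ?thesis using last[of i] diag C_diag \<open>i < m\<close> by simp
      qed (use diag in simp)
    qed
  qed
  then show ?thesis using L(1) C(1) by (intro eq_matI) auto
qed

lemma dim_chol_centering [simp]:
  "dim_row (chol_centering m) = m" "dim_col (chol_centering m) = m"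
  by (simp_all add: chol_centering_def)

lemma chol_centering_carrier: "chol_centering m \<in> carrier_mat m m"
  by (simp add: carrier_matI)

text \<open>The diagonal formula also covers the last entry, where it gives 0.\<close>
lemma chol_centering_entry:
  assumes "i < m" "j < m"
  shows "chol_centering m $$ (i,j) =
    (if i = j then sqrt ((real m - real i - 1) / (real m - real i))
     else if j < i then - 1 / sqrt ((real m - real j) * (real m - real j - 1)) else 0)"
  using assms unfolding chol_centering_def by (auto simp: Let_def algebra_simps)

lemma lower_triangular_chol_centering: "lower_triangular_mat (chol_centering m)"
  by (auto simp: lower_triangular_mat_def chol_centering_entry)

lemma sum_inverse_consecutive_products:
  assumes "j < m"
  shows "(\<Sum>k<j. 1 / ((real m - real k) * (real m - real k - 1))) = 1 / (real m - real j) - 1 / real m"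
proof -
  have "1 / ((real m - real k) * (real m - real k - 1)) = 1 / (real m - real (Suc k)) - 1 / (real m - real k)"
    if "k < j" for k
    using that assms by (simp add: field_simps)
  then have "(\<Sum>k<j. 1 / ((real m - real k) * (real m - real k - 1)))
      = (\<Sum>k<j. 1 / (real m - real (Suc k)) - 1 / (real m - real k))"
    by (intro sum.cong) auto
  also have "\<dots> = 1 / (real m - real j) - 1 / real m"
    by (subst sum_lessThan_telescope) simp
  finally show ?thesis .
qed

lemma chol_centering_mult_transpose_entry:
  assumes "j \<le> i" "i < m"
  shows "(chol_centering m * transpose_mat (chol_centering m)) $$ (i,j) = (if i = j then 1 else 0) - 1 / real m"
proof -
  let ?C = "chol_centering m"
  have "?C $$ (i,k) * ?C $$ (j,k) = 1 / ((real m - real k) * (real m - real k - 1))" if "k < j" for k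
  proof -
    have "(real m - real k) * (real m - real k - 1) > 0" using that assms by simp
    then show ?thesis using that assms by (simp add: chol_centering_entry)
  qed
  then have "(\<Sum>k<j. ?C $$ (i,k) * ?C $$ (j,k)) = 1 / (real m - real j) - 1 / real m"
    using assms by (simp add: sum_inverse_consecutive_products)
  moreover have "?C $$ (i,j) * ?C $$ (j,j) = (if i = j then 1 else 0) - 1 / (real m - real j)"
  proof (cases "i = j")
    case True
    have "(real m - real j - 1) / (real m - real j) \<ge> 0" using assms by simp
    then have "?C $$ (j,j) * ?C $$ (j,j) = (real m - real j - 1) / (real m - real j)"
      using assms by (simp add: chol_centering_entry)
    also have "\<dots> = 1 - 1 / (real m - real j)" using assms by (simp add: field_simps)
    finally show ?thesis using True by simp
  next
    case False
    have "- 1 / sqrt (a * b) * sqrt (b / a) = - 1 / a" if "a > 0" "b > 0" for a b :: real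
      using that by (simp add: real_sqrt_mult real_sqrt_divide)
    moreover have "real m - real j - 1 > 0" using False assms by simp
    ultimately show ?thesis using False assms by (simp add: chol_centering_entry)
  qed
  ultimately show ?thesis
    using lower_triangular_mult_transpose_entry[OF chol_centering_carrier lower_triangular_chol_centering assms]
    by simp
qed

lemma centering_mat_entry:
  "i < m \<Longrightarrow> j < m \<Longrightarrow> centering_mat m $$ (i,j) = (if i = j then 1 else 0) - 1 / real m"
  by (simp add: centering_mat_def)

lemma is_chol_factor_chol_centering: "is_chol_factor m (centering_mat m) (chol_centering m)"
  unfolding is_chol_factor_def
proof (intro conjI allI impI)
  let ?C = "chol_centering m"
  show "centering_mat m = ?C * transpose_mat ?C"
  proof (rule eq_matI)
    fix i j assume "i < dim_row (?C * transpose_mat ?C)" "j < dim_col (?C * transpose_mat ?C)"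
    then have ij: "i < m" "j < m" by simp_all
    have "(?C * transpose_mat ?C) $$ (i,j) = (?C * transpose_mat ?C) $$ (j,i)"
      using mult_transpose_mat_entry[OF chol_centering_carrier ij]
        mult_transpose_mat_entry[OF chol_centering_carrier ij(2,1)] by (simp add: mult.commute)
    then show "centering_mat m $$ (i,j) = (?C * transpose_mat ?C) $$ (i,j)"
      using chol_centering_mult_transpose_entry[of j i m] chol_centering_mult_transpose_entry[of i j m]
        centering_mat_entry[OF ij] ij by (cases "j \<le> i") simp_all
  qed (simp_all add: centering_mat_def)
qed (simp_all add: chol_centering_carrier lower_triangular_chol_centering chol_centering_entry)

theorem lemma2:
  fixes m :: nat
  assumes "m \<ge> 2"
  shows "(\<exists>!L. is_chol_factor m (centering_mat m) L)
         \<and> is_chol_factor m (centering_mat m) (chol_centering m)"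
proof -
  have "L = chol_centering m" if "is_chol_factor m (centering_mat m) L" for L
  proof (rule cholesky_factor_unique)
    show "L * transpose_mat L = chol_centering m * transpose_mat (chol_centering m)"
      using that is_chol_factor_chol_centering[of m] by (simp add: is_chol_factor_def)
    show "\<forall>i. i + 1 < m \<longrightarrow> chol_centering m $$ (i,i) \<noteq> 0"
      by (simp add: chol_centering_entry)
  qed (use that in \<open>simp_all add: is_chol_factor_def chol_centering_carrier
      lower_triangular_chol_centering chol_centering_entry\<close>)
  then show ?thesis using is_chol_factor_chol_centering by blast
qed

end
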